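(* Let $p$ be a prime number and let $n=p_1^{\alpha_1}\cdots p_r^{\alpha_r}$ ($r\ge 1$) be the prime factorization of an integer $n>1$, with distinct primes $p_i$ and exponents $\alpha_i\ge 1$. Then $n$ is $p$-multiplicatively $e$-perfect (i.e. $T_e(n)=n^p$) if and only if for each $i\in\{1,\dots,r\}$ we have $$\sigma(\alpha_i)=\gcd(\alpha_i,\sigma(\alpha_i))\,p\quad\text{and}\quad \alpha_i=\gcd(\alpha_i,\sigma(\alpha_i))\prod_{j\in\{1,\dots,r\}\setminus\{i\}}d(\alpha_j),$$ with $$2^{r-1}\le \prod_{j\in\{1,\dots,r\}\setminus\{i\}}d(\alpha_j)<p,$$ where the empty product is $1$. In particular, if $r=1$, then $\alpha_1\mid\sigma(\alpha_1)$ and $\sigma(\alpha_1)=\alpha_1 p$.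
   Context: $\sigma(m)$ is the sum and $d(m)$ the number of positive divisors of $m$. For $n=p_1^{a_1}\cdots p_r^{a_r}>1$, a divisor $d=p_1^{b_1}\cdots p_r^{b_r}$ of $n$ is an exponential divisor ($e$-divisor) if $b_i\mid a_i$ for all $i$; $T_e(n)$ denotes the product of all $e$-divisors of $n$. One has $T_e(n)=\prod_{i=1}^r p_i^{\sigma(a_i)\prod_{j\ne i}d(a_j)}$. *)

theory Defs
  imports "HOL-Computational_Algebra.Primes"
begin

definition divisor_sigma :: "nat \<Rightarrow> nat" where
  "divisor_sigma m = (\<Sum>d\<in>{d. d dvd m}. d)"

definition num_divisors :: "nat \<Rightarrow> nat" where
  "num_divisors m = card {d. d dvd m}"

definition e_divisor :: "nat \<Rightarrow> nat \<Rightarrow> bool" where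
  "e_divisor d n \<longleftrightarrow> d dvd n \<and>
     (\<forall>q\<in>prime_factors n. multiplicity q d dvd multiplicity q n)"

definition T_e :: "nat \<Rightarrow> nat" where
  "T_e n = (\<Prod>d\<in>{d. e_divisor d n}. d)"

end

theory Submission
  imports Defs "HOL-Library.FuncSet"
begin

text \<open>
  An e-divisor of \<open>n = \<Prod>\<^sub>j p\<^sub>j ^ a\<^sub>j\<close> amounts to a choice of exponents \<open>b\<^sub>j dvd a\<^sub>j\<close>, so the
  exponent of \<open>p\<^sub>i\<close> in \<open>T\<^sub>e(n)\<close> is \<open>\<sigma>(a\<^sub>i) D\<^sub>i\<close> with \<open>D\<^sub>i = \<Prod>\<^sub>j\<^sub>\<noteq>\<^sub>i d(a\<^sub>j)\<close>; thus \<open>T\<^sub>e(n) = n ^ p\<close> iff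
  \<open>\<sigma>(a\<^sub>i) D\<^sub>i = a\<^sub>i p\<close> for all \<open>i\<close>. No \<open>a\<^sub>i\<close> equals 1: otherwise \<open>\<Prod>\<^sub>j d(a\<^sub>j) = p\<close>, so some
  \<open>d(a\<^sub>k) = p\<close> and \<open>D\<^sub>k = 1\<close>, i.e. \<open>\<sigma>(a\<^sub>k) = a\<^sub>k d(a\<^sub>k)\<close>, contradicting \<open>\<sigma>(m) < m d(m)\<close> for \<open>m \<ge> 2\<close>.
  Once \<open>a\<^sub>i \<ge> 2\<close> we have \<open>\<sigma>(a\<^sub>i) > a\<^sub>i\<close>, and dividing \<open>\<sigma>(a\<^sub>i) D\<^sub>i = a\<^sub>i p\<close> by \<open>g = gcd a\<^sub>i \<sigma>(a\<^sub>i)\<close>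
  leaves a cofactor \<open>\<sigma>(a\<^sub>i) / g \<noteq> 1\<close> dividing \<open>p\<close>; hence \<open>\<sigma>(a\<^sub>i) = g p\<close>, \<open>a\<^sub>i = g D\<^sub>i\<close> and
  \<open>D\<^sub>i < p\<close>. Finally every \<open>d(a\<^sub>j) \<ge> 2\<close> gives \<open>D\<^sub>i \<ge> 2 ^ (r - 1)\<close>.
\<close>

lemma divisor_sigma_Suc_0 [simp]: "divisor_sigma (Suc 0) = 1"
  and num_divisors_Suc_0 [simp]: "num_divisors (Suc 0) = 1"
  by (simp_all add: divisor_sigma_def num_divisors_def)

lemma divisor_sigma_gt:
  assumes "m \<ge> 2" shows "divisor_sigma m > m"
proof -
  have "m + 1 = (\<Sum>d\<in>{1, m}. d)" using assms by simp
  also have "\<dots> \<le> (\<Sum>d\<in>{d. d dvd m}. d)"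
    using assms by (intro sum_mono2) (auto simp: finite_divisors_nat)
  finally show ?thesis by (simp add: divisor_sigma_def)
qed

lemma num_divisors_ge_2:
  assumes "m \<ge> 2" shows "num_divisors m \<ge> 2"
proof -
  have "2 = card {1, m}" using assms by simp
  also have "\<dots> \<le> card {d. d dvd m}"
    using assms by (intro card_mono) (auto simp: finite_divisors_nat)
  finally show ?thesis by (simp add: num_divisors_def)
qed

lemma divisor_sigma_less_mult_num_divisors:
  assumes "m \<ge> 2" shows "divisor_sigma m < m * num_divisors m"
proof -
  have "(\<Sum>d\<in>{d. d dvd m}. d) < (\<Sum>d\<in>{d. d dvd m}. m)"
    using assms
    by (intro sum_strict_mono_ex1) (auto simp: finite_divisors_nat intro: dvd_imp_le bexI[of _ 1])
  then show ?thesis by (simp add: divisor_sigma_def num_divisors_def mult.commute)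
qed

lemma sum_PiE_component:
  fixes S :: "'a \<Rightarrow> 'b :: comm_semiring_1 set"
  assumes "finite P" "\<And>j. j \<in> P \<Longrightarrow> finite (S j)" "q \<in> P"
  shows "(\<Sum>b\<in>PiE P S. b q) = (\<Sum>y\<in>S q. y) * (\<Prod>j\<in>P - {q}. of_nat (card (S j)))"
proof -
  have "(\<Sum>b\<in>PiE P S. b q) = (\<Sum>b\<in>PiE P S. \<Prod>j\<in>P. if j = q then b j else 1)"
    using assms by (intro sum.cong refl) (simp add: prod.delta)
  also have "\<dots> = (\<Prod>j\<in>P. \<Sum>y\<in>S j. if j = q then y else 1)"
    using assms by (subst prod_sum_PiE) auto
  also have "\<dots> = (\<Sum>y\<in>S q. y) * (\<Prod>j\<in>P - {q}. \<Sum>y\<in>S j. if j = q then y else 1)"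
    using assms by (subst prod.remove[of P q]) auto
  also have "(\<Prod>j\<in>P - {q}. \<Sum>y\<in>S j. if j = q then y else 1) = (\<Prod>j\<in>P - {q}. of_nat (card (S j)))"
    by (intro prod.cong refl) auto
  finally show ?thesis .
qed

lemma e_divisor_pos: "e_divisor d n \<Longrightarrow> n > 0 \<Longrightarrow> d > 0"
  unfolding e_divisor_def by (blast intro: dvd_pos_nat)

lemma finite_e_divisors: "n > 0 \<Longrightarrow> finite {d. e_divisor d n}"
  by (rule finite_subset[of _ "{d. d dvd n}"]) (auto simp: e_divisor_def finite_divisors_nat)

lemma T_e_pos: "n > 0 \<Longrightarrow> T_e n > 0"
  unfolding T_e_def by (rule prod_pos) (blast intro: e_divisor_pos)

lemma multiplicity_e_divisor_eq_0:
  assumes "e_divisor d n" "n > 0" "prime q" "q \<notin> prime_factors n"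
  shows "multiplicity q d = 0"
proof -
  have "multiplicity q d \<le> multiplicity q n"
    using assms by (intro dvd_imp_multiplicity_le) (auto simp: e_divisor_def)
  with assms show ?thesis by (simp add: prime_factors_multiplicity)
qed

lemma bij_betw_e_divisors_exponents:
  assumes "n > 0"
  shows "bij_betw (\<lambda>d. restrict (\<lambda>j. multiplicity j d) (prime_factors n))
           {d. e_divisor d n} (PiE (prime_factors n) (\<lambda>j. {k. k dvd multiplicity j n}))"
    (is "bij_betw ?\<phi> ?E (PiE ?P ?S)")
proof (rule bij_betwI')
  fix d1 d2 assume d: "d1 \<in> ?E" "d2 \<in> ?E"
  show "?\<phi> d1 = ?\<phi> d2 \<longleftrightarrow> d1 = d2"
  proof
    assume "?\<phi> d1 = ?\<phi> d2"
    show "d1 = d2"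
    proof (rule multiplicity_eq_nat)
      show "d1 > 0" "d2 > 0" using d assms by (auto intro: e_divisor_pos)
      fix r :: nat assume r: "prime r"
      show "multiplicity r d1 = multiplicity r d2"
      proof (cases "r \<in> ?P")
        case True
        then show ?thesis using fun_cong[OF \<open>?\<phi> d1 = ?\<phi> d2\<close>, of r] by simp
      next
        case False
        then show ?thesis using d assms r by (simp add: multiplicity_e_divisor_eq_0)
      qed
    qed
  qed simp
next
  fix d assume "d \<in> ?E"
  then show "?\<phi> d \<in> PiE ?P ?S" by (auto simp: e_divisor_def)
next
  fix b assume b: "b \<in> PiE ?P ?S"
  define d where "d = (\<Prod>j\<in>?P. j ^ b j)"
  have mult_d: "multiplicity r d = (if r \<in> ?P then b r else 0)" if "prime r" for r
    unfolding d_def using that by (intro multiplicity_prod_prime_powers) auto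
  have "d \<noteq> 0" unfolding d_def by (auto simp: prime_gt_0_nat)
  moreover have "b j \<le> multiplicity j n" if "j \<in> ?P" for j
    using b that assms by (auto simp: PiE_def Pi_def prime_factors_multiplicity intro: dvd_imp_le)
  ultimately have "d dvd n" by (intro multiplicity_le_imp_dvd) (auto simp: mult_d)
  moreover have "\<forall>r\<in>?P. multiplicity r d dvd multiplicity r n"
    using b by (auto simp: mult_d in_prime_factors_imp_prime)
  ultimately have "d \<in> ?E" by (simp add: e_divisor_def)
  moreover have "b = ?\<phi> d"
    using b by (auto simp: mult_d in_prime_factors_imp_prime PiE_def extensional_def)
  ultimately show "\<exists>d\<in>?E. b = ?\<phi> d" by blast
qed

lemma multiplicity_T_e:
  assumes "n > 0" "prime q"
  shows "multiplicity q (T_e n) =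
    (if q \<in> prime_factors n then divisor_sigma (multiplicity q n) *
       (\<Prod>j\<in>prime_factors n - {q}. num_divisors (multiplicity j n)) else 0)"
proof -
  let ?P = "prime_factors n" and ?S = "\<lambda>j. {k. k dvd multiplicity j n}"
  have "multiplicity q (T_e n) = (\<Sum>d | e_divisor d n. multiplicity q d)"
    unfolding T_e_def using assms
    by (subst prime_elem_multiplicity_prod_distrib) (auto simp: finite_e_divisors dest: e_divisor_pos)
  moreover have "(\<Sum>d | e_divisor d n. multiplicity q d) =
      divisor_sigma (multiplicity q n) * (\<Prod>j\<in>?P - {q}. num_divisors (multiplicity j n))"
    if q: "q \<in> ?P"
  proof -
    have "(\<Sum>d | e_divisor d n. multiplicity q d) =
        (\<Sum>d | e_divisor d n. restrict (\<lambda>j. multiplicity j d) ?P q)"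
      using q by simp
    also have "\<dots> = (\<Sum>b\<in>PiE ?P ?S. b q)"
      using bij_betw_e_divisors_exponents[OF assms(1)] by (rule sum.reindex_bij_betw)
    also have "\<dots> = (\<Sum>y\<in>?S q. y) * (\<Prod>j\<in>?P - {q}. of_nat (card (?S j)))"
      by (rule sum_PiE_component[OF finite_set_mset _ q])
        (use assms(1) in \<open>auto simp: finite_divisors_nat prime_factors_multiplicity\<close>)
    finally show ?thesis by (simp add: divisor_sigma_def num_divisors_def)
  qed
  moreover have "(\<Sum>d | e_divisor d n. multiplicity q d) = 0" if "q \<notin> ?P"
    using that assms by (intro sum.neutral) (auto intro: multiplicity_e_divisor_eq_0)
  ultimately show ?thesis by simp
qed

lemma T_e_eq_power_iff:
  assumes "n > 0"
  shows "T_e n = n ^ p \<longleftrightarrow>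
    (\<forall>i\<in>prime_factors n. divisor_sigma (multiplicity i n) *
       (\<Prod>j\<in>prime_factors n - {i}. num_divisors (multiplicity j n)) = multiplicity i n * p)"
    (is "_ \<longleftrightarrow> (\<forall>i\<in>?P. ?eq i)")
proof -
  have "multiplicity q (T_e n) = multiplicity q (n ^ p) \<longleftrightarrow> (q \<in> ?P \<longrightarrow> ?eq q)"
    if "prime q" for q
  proof (cases "q \<in> ?P")
    case True
    then show ?thesis using assms that
      by (simp add: multiplicity_T_e prime_elem_multiplicity_power_distrib mult.commute)
  next
    case False
    then have "multiplicity q n = 0" using assms that by (simp add: prime_factors_multiplicity)
    with False show ?thesis using assms that
      by (simp add: multiplicity_T_e prime_elem_multiplicity_power_distrib)
  qed
  moreover have "T_e n = n ^ p \<longleftrightarrow> (\<forall>q. prime q \<longrightarrow> multiplicity q (T_e n) = multiplicity q (n ^ p))"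
    using assms T_e_pos[OF assms] by (auto intro: multiplicity_eq_nat)
  ultimately show ?thesis using in_prime_factors_imp_prime by blast
qed

lemma exponents_ge_2_if_cofactor_eq:
  fixes a :: "'a \<Rightarrow> nat"
  assumes "prime p" "finite P" "\<And>j. j \<in> P \<Longrightarrow> a j \<ge> 1"
    and eq: "\<And>i. i \<in> P \<Longrightarrow> divisor_sigma (a i) * (\<Prod>j\<in>P - {i}. num_divisors (a j)) = a i * p"
    and "i \<in> P"
  shows "a i \<ge> 2"
proof (rule ccontr)
  assume "\<not> a i \<ge> 2"
  with assms(3)[OF \<open>i \<in> P\<close>] have "a i = 1" by simp
  define N where "N = (\<Prod>j\<in>P. num_divisors (a j))"
  have N_split: "N = num_divisors (a j) * (\<Prod>j\<in>P - {j}. num_divisors (a j))" if "j \<in> P" for j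
    unfolding N_def using assms(2) that by (rule prod.remove)
  have "N = p" using N_split[OF \<open>i \<in> P\<close>] eq[OF \<open>i \<in> P\<close>] \<open>a i = 1\<close> by simp
  have "\<exists>k\<in>P. a k \<ge> 2"
  proof (rule ccontr)
    assume "\<not> (\<exists>k\<in>P. a k \<ge> 2)"
    then have "a k = 1" if "k \<in> P" for k using assms(3)[OF that] that by (auto simp: not_le)
    then have "N = 1" unfolding N_def by (intro prod.neutral) simp
    with \<open>N = p\<close> assms(1) show False using not_prime_1 by blast
  qed
  then obtain k where k: "k \<in> P" "a k \<ge> 2" by blast
  have "num_divisors (a k) dvd p" using N_split[OF k(1)] \<open>N = p\<close> by (metis dvd_triv_left)
  with num_divisors_ge_2[OF k(2)] assms(1) have "num_divisors (a k) = p"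
    by (auto simp: prime_nat_iff)
  then have "(\<Prod>j\<in>P - {k}. num_divisors (a j)) = 1"
    using N_split[OF k(1)] \<open>N = p\<close> prime_gt_0_nat[OF assms(1)] by simp
  with eq[OF k(1)] \<open>num_divisors (a k) = p\<close> have "divisor_sigma (a k) = a k * num_divisors (a k)"
    by simp
  with divisor_sigma_less_mult_num_divisors[OF k(2)] show False by simp
qed

lemma mult_eq_mult_prime_iff_gcd:
  fixes s a D p :: nat
  assumes "prime p" "0 < a" "a < s"
  shows "s * D = a * p \<longleftrightarrow> s = gcd a s * p \<and> a = gcd a s * D \<and> D < p"
proof
  assume eq: "s * D = a * p"
  define g where "g = gcd a s"
  have "g \<le> a" using assms(2) unfolding g_def by (rule gcd_le1_nat[OF gr_implies_not0])
  have "g \<noteq> 0" using assms(2) by (simp add: g_def)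
  then obtain t s' where ts: "a = t * g" "s = s' * g" "coprime t s'"
    using gcd_coprime_exists unfolding g_def by blast
  have "g * (s' * D) = g * (t * p)" using eq ts by (simp add: ac_simps)
  with \<open>g \<noteq> 0\<close> have cancelled: "s' * D = t * p" by simp
  then have "s' dvd p" using ts(3) by (metis coprime_commute coprime_dvd_mult_right_iff dvd_triv_left)
  moreover have "s' \<noteq> 1"
  proof
    assume "s' = 1"
    then have "s = g" using ts by simp
    with \<open>g \<le> a\<close> assms(3) show False by simp
  qed
  ultimately have "s' = p" using assms(1) by (auto simp: prime_nat_iff)
  with cancelled prime_gt_0_nat[OF assms(1)] have "D = t" by simp
  have "t < p" using assms(3) ts \<open>s' = p\<close> by simp
  have "s = g * p \<and> a = g * D \<and> D < p"
    using ts(1,2) \<open>s' = p\<close> \<open>D = t\<close> \<open>t < p\<close> by (simp add: mult.commute)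
  then show "s = gcd a s * p \<and> a = gcd a s * D \<and> D < p" unfolding g_def .
next
  assume "s = gcd a s * p \<and> a = gcd a s * D \<and> D < p"
  then obtain g where "s = g * p" "a = g * D" by blast
  then show "s * D = a * p" by simp
qed

lemma two_power_le_prod_num_divisors:
  fixes a :: "'a \<Rightarrow> nat"
  assumes "finite P" "i \<in> P" "\<And>j. j \<in> P \<Longrightarrow> a j \<ge> 2"
  shows "2 ^ (card P - 1) \<le> (\<Prod>j\<in>P - {i}. num_divisors (a j))"
proof -
  have "2 ^ (card P - 1) = (\<Prod>j\<in>P - {i}. 2::nat)"
    using assms by (simp add: card_Diff_singleton)
  also have "\<dots> \<le> (\<Prod>j\<in>P - {i}. num_divisors (a j))"
    using assms by (intro prod_mono) (auto intro: num_divisors_ge_2)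
  finally show ?thesis .
qed

lemma cofactor_eq_iff:
  fixes a :: "'a \<Rightarrow> nat"
  assumes "prime p" "finite P" "\<And>j. j \<in> P \<Longrightarrow> a j \<ge> 1"
  shows "(\<forall>i\<in>P. divisor_sigma (a i) * (\<Prod>j\<in>P - {i}. num_divisors (a j)) = a i * p) \<longleftrightarrow>
    (\<forall>i\<in>P. divisor_sigma (a i) = gcd (a i) (divisor_sigma (a i)) * p \<and>
            a i = gcd (a i) (divisor_sigma (a i)) * (\<Prod>j\<in>P - {i}. num_divisors (a j)) \<and>
            2 ^ (card P - 1) \<le> (\<Prod>j\<in>P - {i}. num_divisors (a j)) \<and>
            (\<Prod>j\<in>P - {i}. num_divisors (a j)) < p)"
    (is "(\<forall>i\<in>P. ?eq i) \<longleftrightarrow> (\<forall>i\<in>P. ?cond i)")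
proof (intro iffI ballI)
  fix i assume "\<forall>i\<in>P. ?eq i" "i \<in> P"
  then have eq: "\<And>i. i \<in> P \<Longrightarrow> ?eq i" by blast
  have ge_2: "\<And>j. j \<in> P \<Longrightarrow> a j \<ge> 2"
    by (rule exponents_ge_2_if_cofactor_eq[where a = a and P = P, OF assms eq])
  from \<open>i \<in> P\<close> have "a i \<ge> 2" by (rule ge_2)
  then have "0 < a i" "a i < divisor_sigma (a i)" by (simp_all add: divisor_sigma_gt)
  from mult_eq_mult_prime_iff_gcd[OF assms(1) this] eq[OF \<open>i \<in> P\<close>]
  have "divisor_sigma (a i) = gcd (a i) (divisor_sigma (a i)) * p \<and>
      a i = gcd (a i) (divisor_sigma (a i)) * (\<Prod>j\<in>P - {i}. num_divisors (a j)) \<and>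
      (\<Prod>j\<in>P - {i}. num_divisors (a j)) < p"
    by (rule iffD1)
  with two_power_le_prod_num_divisors[where a = a, OF assms(2) \<open>i \<in> P\<close> ge_2] show "?cond i"
    by blast
next
  have common_factor: "s * D = a * p" if "s = g * p" "a = g * D" for s g a D :: nat
    using that by simp
  fix i assume "\<forall>i\<in>P. ?cond i" "i \<in> P"
  then show "?eq i" by (intro common_factor[of _ "gcd (a i) (divisor_sigma (a i))"]) blast+
qed

theorem mainTheorem4:
  fixes p n :: nat
  assumes "prime p" and "n > 1"
  shows "(T_e n = n ^ p \<longleftrightarrow>
          (\<forall>i\<in>prime_factors n.
             divisor_sigma (multiplicity i n) =
               gcd (multiplicity i n) (divisor_sigma (multiplicity i n)) * p \<and>
             multiplicity i n =
               gcd (multiplicity i n) (divisor_sigma (multiplicity i n)) *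
               (\<Prod>j\<in>prime_factors n - {i}. num_divisors (multiplicity j n)) \<and>
             2 ^ (card (prime_factors n) - 1)
               \<le> (\<Prod>j\<in>prime_factors n - {i}. num_divisors (multiplicity j n)) \<and>
             (\<Prod>j\<in>prime_factors n - {i}. num_divisors (multiplicity j n)) < p))
       \<and> (card (prime_factors n) = 1 \<longrightarrow> T_e n = n ^ p \<longrightarrow>
          (\<forall>i\<in>prime_factors n.
             multiplicity i n dvd divisor_sigma (multiplicity i n) \<and>
             divisor_sigma (multiplicity i n) = multiplicity i n * p))"
    (is "?characterisation \<and> ?single_prime")
proof
  have "n > 0" using assms(2) by simp
  then have "\<And>j. j \<in> prime_factors n \<Longrightarrow> multiplicity j n \<ge> 1"
    by (auto simp: prime_factors_multiplicity Suc_le_eq)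
  then show ?characterisation
    unfolding T_e_eq_power_iff[OF \<open>n > 0\<close>] by (rule cofactor_eq_iff[OF assms(1) finite_set_mset])
  show ?single_prime
  proof (intro impI ballI)
    fix i assume "card (prime_factors n) = 1" "T_e n = n ^ p" "i \<in> prime_factors n"
    then have "prime_factors n = {i}" by (metis card_1_singletonE singletonD)
    then have "(\<Prod>j\<in>prime_factors n - {i}. num_divisors (multiplicity j n)) = 1" by simp
    moreover have "divisor_sigma (multiplicity i n) *
        (\<Prod>j\<in>prime_factors n - {i}. num_divisors (multiplicity j n)) = multiplicity i n * p"
      using T_e_eq_power_iff[OF \<open>n > 0\<close>] \<open>T_e n = n ^ p\<close> \<open>i \<in> prime_factors n\<close> by blast
    ultimately have "divisor_sigma (multiplicity i n) = multiplicity i n * p" by simp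
    then show "multiplicity i n dvd divisor_sigma (multiplicity i n) \<and>
        divisor_sigma (multiplicity i n) = multiplicity i n * p" by simp
  qed
qed

end
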